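(* Let $n,m$ be positive integers, $\lambda\in\mathcal{P}^m_n$, and let $k_{i,j}=k_{i,j}(\lambda)$ be defined recursively by $$k_{i,j}=\min\left\{m,\left\lceil\frac{\lambda_i-\sum_{\ell=j+1}^n k_{i,\ell}+\sum_{\ell=i+1}^j k_{\ell,j}}{j-i+1}\right\rceil\right\},\quad 1\le i\le j\le n.$$ Then $k_{i,j}\ge k_{i,j-1}$ for all $1\le i<j\le n$.
   Context: $\mathcal{P}^m_n$ is the set of integer partitions $(\lambda_1\ge\cdots\ge\lambda_n\ge0)$ with $\lambda_i\le m(n-i+1)$ for all $i$. The recursion is carried out in order of decreasing $i$ and, for fixed $i$, decreasing $j$ (the right-hand side only involves $k_{i,\ell}$ with $\ell>j$ and $k_{\ell,j}$ with $\ell>i$). *)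

theory Defs
  imports Complex_Main
begin

definition in_P :: "nat \<Rightarrow> nat \<Rightarrow> (nat \<Rightarrow> nat) \<Rightarrow> bool" where
  "in_P m n lam \<longleftrightarrow> (\<forall>i j. 1 \<le> i \<and> i \<le> j \<and> j \<le> n \<longrightarrow> lam j \<le> lam i)
     \<and> (\<forall>i. 1 \<le> i \<and> i \<le> n \<longrightarrow> lam i \<le> m * (n - i + 1))"

function kk :: "nat \<Rightarrow> nat \<Rightarrow> (nat \<Rightarrow> nat) \<Rightarrow> nat \<Rightarrow> nat \<Rightarrow> int" where
  "kk n m lam i j =
     (if 1 \<le> i \<and> i \<le> j \<and> j \<le> n then
        min (int m)
          (\<lceil>real_of_int (int (lam i) - (\<Sum>l\<in>{j+1..n}. kk n m lam i l)
                              + (\<Sum>l\<in>{i+1..j}. kk n m lam l j))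
            / real (j - i + 1)\<rceil>)
      else 0)"
  by pat_completeness auto
termination
  by (relation "measures [\<lambda>(n,m,lam,i,j). n - i, \<lambda>(n,m,lam,i,j). n - j]") auto

end

theory Submission
  imports Defs
begin

text \<open>Write \<open>N(i,j) = \<lambda>(i) - (\<Sum>l>j. k(i,l)) + (\<Sum>i<l\<le>j. k(l,j))\<close> for the numerator of
  the recursion, so that \<open>k(i,j) \<le> c\<close> iff \<open>m \<le> c\<close> or \<open>N(i,j) \<le> (j-i+1) c\<close>.
  Passing from row \<open>i+1\<close> to row \<open>i\<close> gives \<open>N(i,j) = N(i+1,j) + g(i,j) + k(i+1,j)\<close>, where the
  gap \<open>g(i,j) = \<lambda>(i) - \<lambda>(i+1) + (\<Sum>l>j. k(i+1,l) - k(i,l))\<close> satisfies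
  \<open>k(i,j) \<le> g(i,j) + k(i+1,j)\<close> as long as \<open>g(i,j) \<ge> 0\<close>. Since
  \<open>g(i,j-1) = g(i,j) + k(i+1,j) - k(i,j)\<close>, a downward induction on \<open>j\<close> starting from
  \<open>g(i,n) = \<lambda>(i) - \<lambda>(i+1) \<ge> 0\<close> keeps every gap nonnegative; a downward induction on \<open>i\<close>
  then makes every \<open>N\<close>, hence every \<open>k\<close>, nonnegative.
  Row monotonicity is proved from the bottom row up: if the rows below row \<open>i\<close> are monotone,
  replacing \<open>j\<close> by \<open>j+1\<close> increases the column sum by at least \<open>k(j+1,j+1) \<ge> 0\<close>, which
  pays for the term \<open>k(i,j+1)\<close> leaving the row tail; so \<open>N(i,j) \<le> (j-i+1) k(i,j+1)\<close>
  unless \<open>k(i,j+1) = m\<close>.\<close>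

declare kk.simps[simp del]

lemma ceiling_divide_le_iff:
  fixes a c :: int and d :: nat
  assumes "0 < d"
  shows "\<lceil>real_of_int a / real d\<rceil> \<le> c \<longleftrightarrow> a \<le> int d * c"
proof -
  have "\<lceil>real_of_int a / real d\<rceil> \<le> c \<longleftrightarrow> real_of_int a \<le> real_of_int c * real d"
    using assms by (simp add: ceiling_le_iff pos_divide_le_eq)
  also have "\<dots> \<longleftrightarrow> a \<le> int d * c"
    by (metis mult.commute of_int_le_iff of_int_mult of_int_of_nat_eq)
  finally show ?thesis .
qed

locale kk_recursion =
  fixes n m :: nat and lam :: "nat \<Rightarrow> nat"
begin

abbreviation k :: "nat \<Rightarrow> nat \<Rightarrow> int" where
  "k \<equiv> kk n m lam"

definition row_tail :: "nat \<Rightarrow> nat \<Rightarrow> int" where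
  "row_tail i j = (\<Sum>l\<in>{Suc j..n}. k i l)"

definition col_below :: "nat \<Rightarrow> nat \<Rightarrow> int" where
  "col_below i j = (\<Sum>l\<in>{Suc i..j}. k l j)"

definition numerator :: "nat \<Rightarrow> nat \<Rightarrow> int" where
  "numerator i j = int (lam i) - row_tail i j + col_below i j"

lemma k_unfold:
  assumes "1 \<le> i" "i \<le> j" "j \<le> n"
  shows "k i j = min (int m) \<lceil>real_of_int (numerator i j) / real (j - i + 1)\<rceil>"
  using assms by (subst kk.simps) (simp add: numerator_def row_tail_def col_below_def)

lemma k_le_m: "k i j \<le> int m"
  by (subst kk.simps) auto

lemma k_le_iff:
  assumes "1 \<le> i" "i \<le> j" "j \<le> n"
  shows "k i j \<le> c \<longleftrightarrow> int m \<le> c \<or> numerator i j \<le> int (j - i + 1) * c"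
proof -
  have pos: "0 < j - i + 1"
    by simp
  show ?thesis
    by (simp only: k_unfold[OF assms] min_le_iff_disj ceiling_divide_le_iff[OF pos])
qed

lemma numerator_le_if_k_lt_m:
  assumes "1 \<le> i" "i \<le> j" "j \<le> n" "k i j < int m"
  shows "numerator i j \<le> int (j - i + 1) * k i j"
  using k_le_iff[OF assms(1-3), of "k i j"] assms(4) by simp

lemma k_nonneg_if_numerator_nonneg:
  assumes "1 \<le> i" "i \<le> j" "j \<le> n" "0 \<le> numerator i j"
  shows "0 \<le> k i j"
  using k_le_iff[OF assms(1-3), of "-1"] assms(4) by simp

lemma k_diag_le_numerator:
  assumes "1 \<le> i" "i \<le> n"
  shows "k i i \<le> numerator i i"
  using k_le_iff[OF assms(1) order_refl assms(2)] by simp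

lemma row_tail_Suc:
  assumes "j < n"
  shows "row_tail i j = k i (Suc j) + row_tail i (Suc j)"
  unfolding row_tail_def using assms by (simp add: sum.atLeast_Suc_atMost)

lemma col_below_Suc_row:
  assumes "Suc i \<le> j"
  shows "col_below i j = k (Suc i) j + col_below (Suc i) j"
  unfolding col_below_def using assms by (simp add: sum.atLeast_Suc_atMost)

definition row_gap :: "nat \<Rightarrow> nat \<Rightarrow> int" where
  "row_gap i j = int (lam i) - int (lam (Suc i)) + row_tail (Suc i) j - row_tail i j"

lemma numerator_Suc_row:
  assumes "Suc i \<le> j"
  shows "numerator i j = numerator (Suc i) j + row_gap i j + k (Suc i) j"
  using col_below_Suc_row[OF assms] unfolding numerator_def row_gap_def by simp

lemma k_le_row_gap_plus_k_below:
  assumes "1 \<le> i" "Suc i \<le> j" "j \<le> n" "0 \<le> row_gap i j"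
  shows "k i j \<le> row_gap i j + k (Suc i) j"
proof (cases "k (Suc i) j < int m")
  case True
  have "numerator (Suc i) j \<le> int (j - i) * k (Suc i) j"
    using numerator_le_if_k_lt_m[of "Suc i" j] True assms by simp
  moreover have "row_gap i j \<le> int (j - i + 1) * row_gap i j"
    using assms(4) by (simp add: mult_le_cancel_right1)
  moreover have "int (j - i + 1) = int (j - i) + 1"
    using assms by simp
  ultimately have "numerator i j \<le> int (j - i + 1) * (row_gap i j + k (Suc i) j)"
    using numerator_Suc_row[OF assms(2)] by (simp add: algebra_simps)
  then show ?thesis
    using k_le_iff assms by simp
next
  case False
  then show ?thesis
    using k_le_m[of i j] assms(4) by simp
qed

end

locale kk_antitone = kk_recursion +
  assumes lam_antitone: "\<And>i. 1 \<le> i \<Longrightarrow> i < n \<Longrightarrow> lam (Suc i) \<le> lam i"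
begin

lemma row_gap_nonneg:
  assumes "1 \<le> i" "Suc i \<le> j" "j \<le> n"
  shows "0 \<le> row_gap i j"
  using assms(3,2)
proof (induction j rule: inc_induct)
  case base
  then show ?case
    using assms lam_antitone[of i] unfolding row_gap_def row_tail_def by simp
next
  case (step j)
  have "row_gap i j = row_gap i (Suc j) + k (Suc i) (Suc j) - k i (Suc j)"
    using row_tail_Suc[of j i] row_tail_Suc[of j "Suc i"] step.hyps
    unfolding row_gap_def by simp
  moreover have "k i (Suc j) \<le> row_gap i (Suc j) + k (Suc i) (Suc j)"
    using k_le_row_gap_plus_k_below assms step by simp
  ultimately show ?case
    by simp
qed

lemma numerator_diag_Suc_le:
  assumes "1 \<le> i" "i < n"
  shows "numerator (Suc i) (Suc i) - k (Suc i) (Suc i) \<le> numerator i i"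
proof -
  have "numerator i i = numerator (Suc i) (Suc i) + row_gap i (Suc i) - k i (Suc i)"
    using row_tail_Suc[of i i] assms
    unfolding numerator_def row_gap_def col_below_def by simp
  moreover have "k i (Suc i) \<le> row_gap i (Suc i) + k (Suc i) (Suc i)"
    using k_le_row_gap_plus_k_below row_gap_nonneg assms by simp
  ultimately show ?thesis
    by simp
qed

lemma numerator_nonneg:
  assumes "1 \<le> i" "i \<le> j" "j \<le> n"
  shows "0 \<le> numerator i j"
  using assms
proof (induction "n - i" arbitrary: i j rule: less_induct)
  case less
  show ?case
  proof (cases "i = j")
    case True
    show ?thesis
    proof (cases "i = n")
      case True
      then show ?thesis
        using \<open>i = j\<close> unfolding numerator_def row_tail_def col_below_def by simp
    next
      case False
      then have "0 \<le> numerator (Suc i) (Suc i)"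
        using less by simp
      moreover have "k (Suc i) (Suc i) \<le> numerator (Suc i) (Suc i)"
        using k_diag_le_numerator less False by simp
      moreover have "numerator (Suc i) (Suc i) - k (Suc i) (Suc i) \<le> numerator i i"
        using numerator_diag_Suc_le less False by simp
      ultimately show ?thesis
        unfolding \<open>i = j\<close> by linarith
    qed
  next
    case False
    then have "0 \<le> numerator (Suc i) j"
      using less by simp
    moreover have "0 \<le> k (Suc i) j"
      using k_nonneg_if_numerator_nonneg calculation less False by simp
    moreover have "0 \<le> row_gap i j"
      using row_gap_nonneg less False by simp
    ultimately show ?thesis
      using numerator_Suc_row[of i j] less False by simp
  qed
qed

lemma k_nonneg:
  assumes "1 \<le> i" "i \<le> j" "j \<le> n"
  shows "0 \<le> k i j"
  using k_nonneg_if_numerator_nonneg numerator_nonneg assms by simp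

lemma col_below_le_Suc_col_minus_diag:
  assumes rows_below: "\<And>l. Suc i \<le> l \<Longrightarrow> l \<le> j \<Longrightarrow> k l j \<le> k l (Suc j)"
    and "1 \<le> i" "i \<le> j" "Suc j \<le> n"
  shows "col_below i j \<le> col_below i (Suc j) - k (Suc j) (Suc j)"
proof -
  have "col_below i j \<le> (\<Sum>l\<in>{Suc i..j}. k l (Suc j))"
    unfolding col_below_def using rows_below by (intro sum_mono) simp
  also have "\<dots> = col_below i (Suc j) - k (Suc j) (Suc j)"
    unfolding col_below_def using assms by simp
  finally show ?thesis .
qed

lemma k_row_mono:
  assumes "1 \<le> i" "i \<le> j" "Suc j \<le> n"
  shows "k i j \<le> k i (Suc j)"
  using assms
proof (induction "n - i" arbitrary: i j rule: less_induct)
  case less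
  show ?case
  proof (cases "k i (Suc j) < int m")
    case True
    have "col_below i j \<le> col_below i (Suc j) - k (Suc j) (Suc j)"
      using col_below_le_Suc_col_minus_diag less by simp
    moreover have "0 \<le> k (Suc j) (Suc j)"
      using k_nonneg less by simp
    moreover have "numerator i (Suc j) \<le> int (Suc j - i + 1) * k i (Suc j)"
      using numerator_le_if_k_lt_m[of i "Suc j"] True less by linarith
    moreover have "int (Suc j - i + 1) = int (j - i + 1) + 1"
      using less by simp
    ultimately have "numerator i j \<le> int (j - i + 1) * k i (Suc j)"
      using row_tail_Suc[of j i] less unfolding numerator_def by (simp add: algebra_simps)
    then show ?thesis
      using k_le_iff less by simp
  next
    case False
    then show ?thesis
      using k_le_m[of i j] by simp
  qed
qed

end

theorem lemma4p3:
  fixes n m :: nat and lam :: "nat \<Rightarrow> nat"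
  assumes "n \<ge> 1" and "m \<ge> 1" and "in_P m n lam"
  shows "\<forall>i j. 1 \<le> i \<and> i < j \<and> j \<le> n \<longrightarrow> kk n m lam i j \<ge> kk n m lam i (j - 1)"
proof -
  interpret kk_antitone n m lam
    using assms(3) unfolding in_P_def by unfold_locales simp
  show ?thesis
  proof (intro allI impI)
    fix i j assume ij: "1 \<le> i \<and> i < j \<and> j \<le> n"
    then obtain j' where "j = Suc j'" "i \<le> j'"
      by (cases j) auto
    then show "k i (j - 1) \<le> k i j"
      using k_row_mono[of i j'] ij by simp
  qed
qed

end
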